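(* Let $n \ge 2$ and let $g$ be the Grauert metric on $(\mathbb C^n)^{\ast} = \mathbb C^n \setminus \{0\}$, as defined in the context. Then $K^+_g(z) \to +\infty$ as $|z| \to 0$. Furthermore, there exists $R > 0$ such that $K^-_g(z) < 0$ for all $z$ with $|z| \ge R$.
   Context: Let $u:(0,\infty)\to\mathbb R$ be $u(t) = \frac{t-1}{t\log t}$ for $t \neq 1$ and $u(1)=1$; it is positive and real analytic on $(0,\infty)$. Let $v(t) = \int_0^t \tau u^2(\tau)\,d\tau$ for $t>0$. For $z \in (\mathbb C^n)^\ast$ and a tangent vector $X \in \mathbb C^n$ at $z$, the Grauert metric is the K\"ahler metric $$g(z,X) = \Big(1 + \frac{v(|z|^2)}{|z|^2}\Big)|X|^2 + \Big(u^2(|z|^2) - \frac{v(|z|^2)}{|z|^4}\Big)|\langle X, z\rangle|^2,$$ where $\langle X,z\rangle = \sum_{j} X_j \overline{z_j}$ is the standard Hermitian inner product. If $h(T)|dT|^2$ is a Hermitian metric on a domain in $\mathbb C$, its Gaussian curvature is $-2 h^{-1}\,\partial^2 \log h/\partial T \partial \overline T$. The holomorphic sectional curvature $K_g(z,X)$ of $g$ at $z$ in the direction of a nonzero $X$ is the supremum, over all holomorphic maps $\phi$ from a neighbourhood of $0\in\mathbb C$ into $(\mathbb C^n)^\ast$ with $\phi(0)=z$ and $\phi'(0)=X$, of the Gaussian curvature at $0$ of the pulled-back metric $\phi^\ast g$. Set $K^+_g(z) = \sup_{X\neq 0} K_g(z,X)$ and $K^-_g(z) = \inf_{X \neq 0}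 K_g(z,X)$. *)

theory Defs
  imports "HOL-Analysis.Analysis"
begin

definition u_fun :: "real \<Rightarrow> real" where
  "u_fun t = (if t = 1 then 1 else (t - 1) / (t * ln t))"

definition v_fun :: "real \<Rightarrow> real" where
  "v_fun t = integral {0..t} (\<lambda>\<tau>. \<tau> * (u_fun \<tau>)\<^sup>2)"

definition herm :: "complex^'n \<Rightarrow> complex^'n \<Rightarrow> complex" where
  "herm X z = (\<Sum>j\<in>UNIV. X $ j * cnj (z $ j))"

definition grauert :: "complex^'n \<Rightarrow> complex^'n \<Rightarrow> real" where
  "grauert z X =
     (1 + v_fun ((norm z)\<^sup>2) / (norm z)\<^sup>2) * (norm X)\<^sup>2
   + ((u_fun ((norm z)\<^sup>2))\<^sup>2 - v_fun ((norm z)\<^sup>2) / (norm z) ^ 4) * (cmod (herm X z))\<^sup>2"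

text \<open>Wirtinger operator d^2/(dT dTbar) = (1/4)(d^2/ds^2 + d^2/dt^2), T = s + i t, at T = 0.\<close>
definition ddbar_at0 :: "(complex \<Rightarrow> real) \<Rightarrow> real" where
  "ddbar_at0 f = (1/4) * (deriv (deriv (\<lambda>s. f (complex_of_real s))) 0
                        + deriv (deriv (\<lambda>t. f (\<i> * complex_of_real t))) 0)"

text \<open>Gaussian curvature at 0 of the metric h(T)|dT|^2.\<close>
definition gauss_curv0 :: "(complex \<Rightarrow> real) \<Rightarrow> real" where
  "gauss_curv0 h = - 2 / h 0 * ddbar_at0 (\<lambda>T. ln (h T))"

definition vderiv :: "(complex \<Rightarrow> complex^'n) \<Rightarrow> complex \<Rightarrow> complex^'n" where
  "vderiv \<phi> T = (\<chi> j. deriv (\<lambda>w. \<phi> w $ j) T)"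

definition adm_curves :: "complex^'n \<Rightarrow> complex^'n \<Rightarrow> (complex \<Rightarrow> complex^'n) set" where
  "adm_curves z X = {\<phi>. \<exists>S. open S \<and> 0 \<in> S \<and>
       (\<forall>j. (\<lambda>T. \<phi> T $ j) holomorphic_on S) \<and> (\<forall>T\<in>S. \<phi> T \<noteq> 0) \<and>
       \<phi> 0 = z \<and> vderiv \<phi> 0 = X}"

definition pullback :: "(complex \<Rightarrow> complex^'n) \<Rightarrow> complex \<Rightarrow> real" where
  "pullback \<phi> T = grauert (\<phi> T) (vderiv \<phi> T)"

definition hsc :: "complex^'n \<Rightarrow> complex^'n \<Rightarrow> ereal" where
  "hsc z X = (SUP \<phi>\<in>adm_curves z X. ereal (gauss_curv0 (pullback \<phi>)))"

definition Kplus :: "complex^'n \<Rightarrow> ereal" where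
  "Kplus z = (SUP X\<in>{X. X \<noteq> 0}. hsc z X)"

definition Kminus :: "complex^'n \<Rightarrow> ereal" where
  "Kminus z = (INF X\<in>{X. X \<noteq> 0}. hsc z X)"

end

(*
  The metric depends on z only through t = |z|^2: g(z,X) = A(t)|X|^2 + B(t)|<X,z>|^2 with
  A = 1 + v/t, B = u^2 - v/t^2, and A' = B.  The curvature of a pulled-back metric h at 0 is
  -(1/2h) times the sum of the second derivatives of ln h along the real and the imaginary
  axis, so it depends only on the 3-jet of the curve.

  Near 0, choose X orthogonal to z (here n >= 2 is used); along the complex line z + T X the
  curvature is -4B/A^2.  Since v(t) ~ 1/L and u(t)^2 ~ 1/(t L)^2 with L = -ln t, this is at least
  4(1 - t)^2 (L - 1)/(t L + 1)^2, which tends to infinity as t -> 0.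

  Far out, take X = z.  For every curve the curvature is K_1(t) minus a nonnegative multiple of
  |Y|^2 - |<Y,z>|^2/t, where Y is the second derivative of the curve (Cauchy-Schwarz), and the
  explicit function K_1 is negative for large t.
*)

theory Submission
  imports Defs "HOL-Real_Asymp.Real_Asymp" "HOL-Complex_Analysis.Cauchy_Integral_Formula"
begin

section \<open>The functions u and v\<close>

lemma isCont_u_fun:
  assumes "t > 0"
  shows "isCont u_fun t"
proof (cases "t = 1")
  case True
  have "((\<lambda>t::real. (t - 1) / (t * ln t)) \<longlongrightarrow> 1) (at 1)"
    by real_asymp
  then have "(u_fun \<longlongrightarrow> 1) (at 1)"
    by (rule Lim_transform_eventually) (auto simp: eventually_at_filter u_fun_def)
  then show ?thesis
    using True by (simp add: isCont_def u_fun_def)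
next
  case False
  have "eventually (\<lambda>x. x \<noteq> 1) (nhds t)"
    using False by (intro t1_space_nhds)
  then have "eventually (\<lambda>x. (x - 1) / (x * ln x) = u_fun x) (nhds t)"
    by eventually_elim (simp add: u_fun_def)
  moreover have "isCont (\<lambda>t. (t - 1) / (t * ln t)) t"
    using assms False by (intro continuous_intros) auto
  ultimately show ?thesis
    by (rule isCont_cong[THEN iffD1])
qed

lemma continuous_on_v_integrand: "continuous_on {0<..} (\<lambda>t. t * (u_fun t)\<^sup>2)"
  by (intro continuous_at_imp_continuous_on ballI continuous_intros isCont_u_fun) auto

lemma v_integrand_eq:
  assumes "0 \<le> t" "t < 1"
  shows "t * (u_fun t)\<^sup>2 = (1 - t)\<^sup>2 / (t * (ln t)\<^sup>2)"
  using assms by (cases "t = 0") (auto simp: u_fun_def power2_eq_square field_simps)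

lemma v_integrand_le:
  assumes "0 \<le> t" "t < 1"
  shows "t * (u_fun t)\<^sup>2 \<le> 1 / (t * (ln t)\<^sup>2)"
proof -
  have "(1 - t)\<^sup>2 \<le> 1"
    using assms by (simp add: power_le_one)
  then show ?thesis
    using assms by (simp add: v_integrand_eq divide_right_mono)
qed

lemma has_integral_inverse_mult_ln_squared:
  fixes c :: real
  assumes "0 < c" "c < 1"
  shows "((\<lambda>t. 1 / (t * (ln t)\<^sup>2)) has_integral - 1 / ln c) {0..c}"
proof -
  have "continuous_on {0..c} (\<lambda>t. - 1 / ln t)"
  proof (rule continuous_on_eq_continuous_within[THEN iffD2], intro ballI)
    fix x assume x: "x \<in> {0..c}"
    show "continuous (at x within {0..c}) (\<lambda>t. - 1 / ln t)"
    proof (cases "x = 0")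
      case True
      have "((\<lambda>t::real. - 1 / ln t) \<longlongrightarrow> 0) (at_right 0)"
        by real_asymp
      then have "((\<lambda>t. - 1 / ln t) \<longlongrightarrow> 0) (at 0 within {0..c})"
        unfolding at_within_Icc_at_right[OF assms(1)] .
      then show ?thesis
        using True by (simp add: continuous_within)
    next
      case False
      then have "isCont (\<lambda>t. - 1 / ln t) x"
        using x assms by (intro continuous_intros) auto
      then show ?thesis
        by (rule continuous_within_subset) auto
    qed
  qed
  moreover have "((\<lambda>t. - 1 / ln t) has_real_derivative 1 / (t * (ln t)\<^sup>2)) (at t)"
    if "0 < t" "t < c" for t
    using that assms by (auto intro!: derivative_eq_intros simp: power2_eq_square field_simps)
  ultimately have "((\<lambda>t. 1 / (t * (ln t)\<^sup>2)) has_integral - 1 / ln c - (- 1 / ln 0)) {0..c}"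
    using assms
    by (intro fundamental_theorem_of_calculus_interior)
       (auto simp: has_real_derivative_iff_has_vector_derivative[symmetric])
  then show ?thesis
    by simp
qed

lemma v_integrand_integrable_on:
  assumes "0 \<le> c"
  shows "(\<lambda>t. t * (u_fun t)\<^sup>2) integrable_on {0..c}"
proof -
  have near_0: "(\<lambda>t. t * (u_fun t)\<^sup>2) integrable_on {0..1/2::real}"
  proof -
    have "(\<lambda>t. t * (u_fun t)\<^sup>2) integrable_on {0<..1/2::real}"
    proof (rule measurable_bounded_by_integrable_imp_integrable_real)
      show "(\<lambda>t. t * (u_fun t)\<^sup>2) \<in> borel_measurable (lebesgue_on {0<..1/2})"
        by (rule continuous_imp_measurable_on_sets_lebesgue)
           (auto intro: continuous_on_subset[OF continuous_on_v_integrand])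
      have "(\<lambda>t::real. 1 / (t * (ln t)\<^sup>2)) integrable_on {0..1/2}"
        using has_integral_inverse_mult_ln_squared[of "1/2::real"] by auto
      then show "(\<lambda>t. 1 / (t * (ln t)\<^sup>2)) integrable_on {0<..1/2::real}"
        by (rule integrable_spike_set) (auto intro: negligible_subset[of "{0}"])
      show "\<bar>t * (u_fun t)\<^sup>2\<bar> \<le> 1 / (t * (ln t)\<^sup>2)" if "t \<in> {0<..1/2}" for t
        using that v_integrand_le[of t] by simp
    qed auto
    then show ?thesis
      by (rule integrable_spike_set) (auto intro: negligible_subset[of "{0}"])
  qed
  show ?thesis
  proof (cases "c \<le> 1/2")
    case True
    then show ?thesis
      using assms by (intro integrable_subinterval_real[OF near_0]) auto
  next
    case False
    have "(\<lambda>t. t * (u_fun t)\<^sup>2) integrable_on {1/2..c}"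
      by (intro integrable_continuous_real continuous_on_subset[OF continuous_on_v_integrand]) auto
    with near_0 False show ?thesis
      by (intro Henstock_Kurzweil_Integration.integrable_combine[of 0 "1/2" c]) simp_all
  qed
qed

lemma v_fun_nonneg: "0 \<le> t \<Longrightarrow> 0 \<le> v_fun t"
  unfolding v_fun_def by (intro integral_nonneg v_integrand_integrable_on) auto

lemma v_fun_bounds:
  assumes "0 < c" "c < 1"
  shows "(1 - c)\<^sup>2 / - ln c \<le> v_fun c" "v_fun c \<le> 1 / - ln c"
proof -
  have g: "((\<lambda>t. 1 / (t * (ln t)\<^sup>2)) has_integral 1 / - ln c) {0..c}"
    using has_integral_inverse_mult_ln_squared[OF assms] by simp
  have f: "((\<lambda>t. t * (u_fun t)\<^sup>2) has_integral v_fun c) {0..c}"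
    unfolding v_fun_def using assms by (intro integrable_integral v_integrand_integrable_on) simp
  have "((\<lambda>t. (1 - c)\<^sup>2 * (1 / (t * (ln t)\<^sup>2))) has_integral (1 - c)\<^sup>2 * (1 / - ln c)) {0..c}"
    by (rule has_integral_mult_right[OF g])
  moreover have "(1 - c)\<^sup>2 * (1 / (t * (ln t)\<^sup>2)) \<le> t * (u_fun t)\<^sup>2" if "t \<in> {0..c}" for t
  proof -
    have t: "0 \<le> t" "t \<le> c"
      using that by auto
    have "(1 - c)\<^sup>2 \<le> (1 - t)\<^sup>2"
      using t assms by (intro power_mono) auto
    then show ?thesis
      using t assms by (simp add: v_integrand_eq divide_right_mono)
  qed
  ultimately show "(1 - c)\<^sup>2 / - ln c \<le> v_fun c"
    using has_integral_le[OF _ f] by fastforce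
  show "v_fun c \<le> 1 / - ln c"
  proof (rule has_integral_le[OF f g])
    show "t * (u_fun t)\<^sup>2 \<le> 1 / (t * (ln t)\<^sup>2)" if "t \<in> {0..c}" for t
      using that assms by (intro v_integrand_le) auto
  qed
qed

lemma v_fun_has_derivative:
  assumes "t > 0"
  shows "(v_fun has_real_derivative t * (u_fun t)\<^sup>2) (at t)"
proof -
  define c where "c = t / 2"
  have c: "0 < c" "c < t"
    using assms by (auto simp: c_def)
  have v_split: "v_fun x = v_fun c + integral {c..x} (\<lambda>t. t * (u_fun t)\<^sup>2)" if "c \<le> x" for x
    unfolding v_fun_def using that c
    by (intro Henstock_Kurzweil_Integration.integral_combine[symmetric] v_integrand_integrable_on) auto
  have "((\<lambda>x. integral {c..x} (\<lambda>t. t * (u_fun t)\<^sup>2)) has_real_derivative t * (u_fun t)\<^sup>2)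
          (at t within {c..t + 1})"
    using c by (intro integral_has_real_derivative continuous_on_subset[OF continuous_on_v_integrand]) auto
  then have "((\<lambda>x. v_fun c + integral {c..x} (\<lambda>t. t * (u_fun t)\<^sup>2)) has_real_derivative t * (u_fun t)\<^sup>2)
               (at t)"
    using c by (intro DERIV_add[OF DERIV_const, simplified]) (simp add: at_within_Icc_at)
  then show ?thesis
  proof (rule has_field_derivative_transform_within_open[where S = "{c<..}"])
    show "v_fun c + integral {c..x} (\<lambda>t. t * (u_fun t)\<^sup>2) = v_fun x" if "x \<in> {c<..}" for x
      using that v_split[of x] by simp
  qed (use c in auto)
qed

section \<open>The coefficients of the metric\<close>

(* Closed forms of u' and u'' for t \<noteq> 1; at t = 1 they are the junk value 0. *)
definition u_deriv :: "real \<Rightarrow> real" where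
  "u_deriv t = (ln t + 1 - t) / (t\<^sup>2 * (ln t)\<^sup>2)"

definition u_deriv2 :: "real \<Rightarrow> real" where
  "u_deriv2 t = ((1 - t) * ln t - 2 * (ln t + 1 - t) * (ln t + 1)) / (t ^ 3 * (ln t) ^ 3)"

definition A_coef :: "real \<Rightarrow> real" where
  "A_coef t = 1 + v_fun t / t"

definition B_coef :: "real \<Rightarrow> real" where
  "B_coef t = (u_fun t)\<^sup>2 - v_fun t / t\<^sup>2"

definition C_coef :: "real \<Rightarrow> real" where
  "C_coef t = 2 * u_fun t * u_deriv t - (u_fun t)\<^sup>2 / t + 2 * v_fun t / t ^ 3"

definition D_coef :: "real \<Rightarrow> real" where
  "D_coef t = 2 * (u_deriv t)\<^sup>2 + 2 * u_fun t * u_deriv2 t - 2 * u_fun t * u_deriv t / t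
     + 3 * (u_fun t)\<^sup>2 / t\<^sup>2 - 6 * v_fun t / t ^ 4"

lemma grauert_eq_coef:
  "grauert z X = A_coef ((norm z)\<^sup>2) * (norm X)\<^sup>2 + B_coef ((norm z)\<^sup>2) * (cmod (herm X z))\<^sup>2"
  by (simp add: grauert_def A_coef_def B_coef_def flip: power_mult)

lemma A_coef_pos: "t > 0 \<Longrightarrow> A_coef t > 0"
  using v_fun_nonneg[of t] by (simp add: A_coef_def add_pos_nonneg)

lemma A_coef_add_B_coef: "t > 0 \<Longrightarrow> A_coef t + t * B_coef t = 1 + t * (u_fun t)\<^sup>2"
  by (simp add: A_coef_def B_coef_def field_simps power2_eq_square)

lemma u_fun_has_derivative:
  assumes "t > 0" "t \<noteq> 1"
  shows "(u_fun has_real_derivative u_deriv t) (at t)"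
proof -
  have "((\<lambda>t. (t - 1) / (t * ln t)) has_real_derivative u_deriv t) (at t)"
    using assms unfolding u_deriv_def
    by (auto intro!: derivative_eq_intros simp: field_simps power2_eq_square)
  then show ?thesis
    by (rule has_field_derivative_transform_within_open[where S = "{0<..} - {1}"])
       (use assms in \<open>auto simp: u_fun_def\<close>)
qed

lemma u_deriv_has_derivative:
  assumes "t > 0" "t \<noteq> 1"
  shows "(u_deriv has_real_derivative u_deriv2 t) (at t)"
  using assms unfolding u_deriv_def u_deriv2_def
  by (auto intro!: derivative_eq_intros simp: field_simps power2_eq_square eval_nat_numeral)

lemma A_coef_has_derivative:
  assumes "t > 0"
  shows "(A_coef has_real_derivative B_coef t) (at t)"
proof -
  have "(A_coef has_real_derivative (t * (u_fun t)\<^sup>2 * t - v_fun t) / (t * t)) (at t)"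
    unfolding A_coef_def using assms by (auto intro!: derivative_eq_intros v_fun_has_derivative)
  then show ?thesis
    using assms by (simp add: B_coef_def field_simps power2_eq_square)
qed

lemma B_coef_has_derivative:
  assumes "t > 0" "t \<noteq> 1"
  shows "(B_coef has_real_derivative C_coef t) (at t)"
proof -
  have "(B_coef has_real_derivative
          2 * u_fun t * u_deriv t - (t * (u_fun t)\<^sup>2 * t\<^sup>2 - v_fun t * (2 * t)) / (t\<^sup>2 * t\<^sup>2)) (at t)"
    unfolding B_coef_def using assms
    by (auto intro!: derivative_eq_intros v_fun_has_derivative u_fun_has_derivative
             simp: power2_eq_square)
  then show ?thesis
    by (rule DERIV_cong)
       (use assms in \<open>simp add: C_coef_def field_simps power2_eq_square eval_nat_numeral\<close>)
qed

lemma C_coef_has_derivative: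
  assumes "t > 0" "t \<noteq> 1"
  shows "(C_coef has_real_derivative D_coef t) (at t)"
proof -
  have "(C_coef has_real_derivative
          2 * (u_deriv t * u_deriv t + u_fun t * u_deriv2 t)
          - (2 * u_fun t * u_deriv t * t - (u_fun t)\<^sup>2) / (t * t)
          + 2 * (t * (u_fun t)\<^sup>2 * t ^ 3 - v_fun t * (3 * t\<^sup>2)) / (t ^ 3 * t ^ 3)) (at t)"
    unfolding C_coef_def using assms
    by (auto intro!: derivative_eq_intros v_fun_has_derivative u_fun_has_derivative
               u_deriv_has_derivative simp: power2_eq_square mult_ac)
  then show ?thesis
    by (rule DERIV_cong)
       (use assms in \<open>simp add: D_coef_def field_simps power2_eq_square eval_nat_numeral\<close>)
qed

lemma herm_self: "herm X X = of_real ((norm X)\<^sup>2)"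
proof -
  have "herm X X = (\<Sum>j\<in>UNIV. of_real ((cmod (X $ j))\<^sup>2))"
    unfolding herm_def by (simp only: complex_norm_square)
  also have "\<dots> = of_real (\<Sum>j\<in>UNIV. (cmod (X $ j))\<^sup>2)"
    by simp
  also have "(\<Sum>j\<in>UNIV. (cmod (X $ j))\<^sup>2) = (norm X)\<^sup>2"
    unfolding norm_vec_def L2_set_def by (simp add: sum_nonneg)
  finally show ?thesis .
qed

lemma herm_commute: "herm Y X = cnj (herm X Y)"
  by (simp add: herm_def cnj_sum mult.commute)

lemma herm_zero_left [simp]: "herm 0 z = 0"
  by (simp add: herm_def)

lemma herm_zero_right [simp]: "herm X 0 = 0"
  by (simp add: herm_def)

lemma herm_add_left: "herm (X + Y) z = herm X z + herm Y z"
  by (simp add: herm_def distrib_right sum.distrib)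

lemma herm_scale_left: "herm (c *s X) Y = c * herm X Y"
  by (simp add: herm_def sum_distrib_left mult.assoc)

lemma herm_scale_right: "herm X (c *s Y) = cnj c * herm X Y"
  by (simp add: herm_def sum_distrib_left mult_ac)

lemma norm_herm_le: "cmod (herm X Y) \<le> norm X * norm Y"
proof -
  have "cmod (herm X Y) \<le> (\<Sum>j\<in>UNIV. cmod (X $ j * cnj (Y $ j)))"
    unfolding herm_def by (rule norm_sum)
  also have "\<dots> = (\<Sum>j\<in>UNIV. \<bar>cmod (X $ j)\<bar> * \<bar>cmod (Y $ j)\<bar>)"
    by (simp add: norm_mult)
  also have "\<dots> \<le> norm X * norm Y"
    unfolding norm_vec_def by (rule L2_set_mult_ineq)
  finally show ?thesis .
qed

lemma has_vector_derivative_herm: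
  assumes "\<And>j. ((\<lambda>s. F s $ j) has_vector_derivative F' $ j) (at s)"
    and "\<And>j. ((\<lambda>s. G s $ j) has_vector_derivative G' $ j) (at s)"
  shows "((\<lambda>s. herm (F s) (G s)) has_vector_derivative herm F' (G s) + herm (F s) G') (at s)"
proof -
  have "((\<lambda>s. herm (F s) (G s)) has_vector_derivative
          (\<Sum>j\<in>UNIV. F s $ j * cnj (G' $ j) + F' $ j * cnj (G s $ j))) (at s)"
    unfolding herm_def by (intro derivative_intros assms)
  then show ?thesis
    by (simp add: herm_def sum.distrib add.commute)
qed

lemma deriv_deriv_ln:
  fixes h h' :: "real \<Rightarrow> real"
  assumes U: "open U" "x \<in> U"
    and h': "\<And>s. s \<in> U \<Longrightarrow> (h has_real_derivative h' s) (at s)"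
    and h'': "(h' has_real_derivative h'') (at x)"
    and pos: "h x > 0"
  shows "deriv (deriv (\<lambda>s. ln (h s))) x = h'' / h x - (h' x / h x)\<^sup>2"
proof -
  have "isCont h x"
    using h'[OF U(2)] by (rule DERIV_isCont)
  then have "eventually (\<lambda>s. h s > 0) (nhds x)"
    using pos by (simp add: isCont_def tendsto_at_iff_tendsto_nhds order_tendstoD)
  moreover have "eventually (\<lambda>s. s \<in> U) (nhds x)"
    using U by (rule eventually_nhds_in_open)
  ultimately have "eventually (\<lambda>s. s \<in> U \<and> h s > 0) (nhds x)"
    by eventually_elim simp
  then obtain V where V: "open V" "x \<in> V" "\<And>s. s \<in> V \<Longrightarrow> s \<in> U \<and> h s > 0"
    unfolding eventually_nhds by blast
  have deriv_ln: "deriv (\<lambda>s. ln (h s)) s = h' s / h s" if "s \<in> V" for s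
  proof (rule DERIV_imp_deriv)
    have "((\<lambda>s. ln (h s)) has_real_derivative inverse (h s) * h' s) (at s)"
      using V(3)[OF that] by (intro DERIV_chain2[OF DERIV_ln h']) auto
    then show "((\<lambda>s. ln (h s)) has_real_derivative h' s / h s) (at s)"
      by (simp add: divide_inverse mult.commute)
  qed
  have "((\<lambda>s. h' s / h s) has_real_derivative (h'' * h x - h' x * h' x) / (h x * h x)) (at x)"
    using pos by (intro DERIV_divide h'' h' U(2)) simp
  then have "(deriv (\<lambda>s. ln (h s)) has_real_derivative (h'' * h x - h' x * h' x) / (h x * h x)) (at x)"
    by (rule has_field_derivative_transform_within_open[OF _ V(1) V(2)]) (simp add: deriv_ln)
  then show ?thesis
    using pos by (simp add: DERIV_imp_deriv field_simps power2_eq_square)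
qed

definition ln_combination_deriv2 ::
    "real \<Rightarrow> real \<Rightarrow> real \<Rightarrow> real \<Rightarrow> real \<Rightarrow> real \<Rightarrow>
     real \<Rightarrow> real \<Rightarrow> real \<Rightarrow> real \<Rightarrow> real \<Rightarrow> real \<Rightarrow> real"
  where "ln_combination_deriv2 A B C D r1 r2 a0 a1 a2 b0 b1 b2 =
    (let h0 = A * a0 + B * b0;
         h1 = B * r1 * a0 + A * a1 + C * r1 * b0 + B * b1;
         h2 = C * r1\<^sup>2 * a0 + B * r2 * a0 + 2 * B * r1 * a1 + A * a2
            + D * r1\<^sup>2 * b0 + C * r2 * b0 + 2 * C * r1 * b1 + B * b2
     in h2 / h0 - (h1 / h0)\<^sup>2)"

lemma deriv_deriv_ln_combination:
  fixes R a b R' a' b' A B C :: "real \<Rightarrow> real"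
  assumes U: "open U" "x \<in> U"
    and R': "\<And>s. s \<in> U \<Longrightarrow> (R has_real_derivative R' s) (at s)"
    and a': "\<And>s. s \<in> U \<Longrightarrow> (a has_real_derivative a' s) (at s)"
    and b': "\<And>s. s \<in> U \<Longrightarrow> (b has_real_derivative b' s) (at s)"
    and R'': "(R' has_real_derivative R'') (at x)"
    and a'': "(a' has_real_derivative a'') (at x)"
    and b'': "(b' has_real_derivative b'') (at x)"
    and A': "\<And>s. s \<in> U \<Longrightarrow> (A has_real_derivative B (R s)) (at (R s))"
    and B': "\<And>s. s \<in> U \<Longrightarrow> (B has_real_derivative C (R s)) (at (R s))"
    and C': "(C has_real_derivative D) (at (R x))"
    and pos: "A (R x) * a x + B (R x) * b x > 0"
  shows "deriv (deriv (\<lambda>s. ln (A (R s) * a s + B (R s) * b s))) x =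
    ln_combination_deriv2 (A (R x)) (B (R x)) (C (R x)) D (R' x) R'' (a x) (a' x) a'' (b x) (b' x) b''"
proof -
  have "((\<lambda>s. A (R s) * a s + B (R s) * b s) has_real_derivative
          B (R s) * R' s * a s + A (R s) * a' s + C (R s) * R' s * b s + B (R s) * b' s) (at s)"
    if "s \<in> U" for s
    using DERIV_chain2[OF A'[OF that] R'[OF that]] DERIV_chain2[OF B'[OF that] R'[OF that]]
          a'[OF that] b'[OF that]
    by (auto intro!: derivative_eq_intros simp: algebra_simps)
  moreover have "((\<lambda>s. B (R s) * R' s * a s + A (R s) * a' s + C (R s) * R' s * b s + B (R s) * b' s)
      has_real_derivative
        C (R x) * (R' x)\<^sup>2 * a x + B (R x) * R'' * a x + 2 * B (R x) * R' x * a' x + A (R x) * a''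
      + D * (R' x)\<^sup>2 * b x + C (R x) * R'' * b x + 2 * C (R x) * R' x * b' x + B (R x) * b'') (at x)"
    using DERIV_chain2[OF A'[OF U(2)] R'[OF U(2)]] DERIV_chain2[OF B'[OF U(2)] R'[OF U(2)]]
          DERIV_chain2[OF C' R'[OF U(2)]] a'[OF U(2)] b'[OF U(2)] R'' a'' b''
    by (auto intro!: derivative_eq_intros simp: algebra_simps power2_eq_square)
  ultimately show ?thesis
    using pos by (subst deriv_deriv_ln[OF U]) (simp_all add: ln_combination_deriv2_def Let_def)
qed

section \<open>Curvature along a holomorphic curve\<close>

locale holomorphic_curve =
  fixes \<phi> :: "complex \<Rightarrow> complex^'n" and S :: "complex set"
  assumes open_domain: "open S"
    and holomorphic_components: "\<And>j. (\<lambda>T. \<phi> T $ j) holomorphic_on S"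
begin

lemma holomorphic_curve_vderiv: "holomorphic_curve (vderiv \<phi>) S"
proof
  show "(\<lambda>T. vderiv \<phi> T $ j) holomorphic_on S" for j
    unfolding vderiv_def using holomorphic_components open_domain
    by (simp add: holomorphic_deriv)
qed (fact open_domain)

lemma line_has_vector_derivative:
  assumes "e * of_real s \<in> S"
  shows "((\<lambda>s. \<phi> (e * of_real s) $ j) has_vector_derivative (e *s vderiv \<phi> (e * of_real s)) $ j) (at s)"
proof -
  have "((\<lambda>T. \<phi> T $ j) has_field_derivative vderiv \<phi> (e * of_real s) $ j) (at (e * of_real s))"
    unfolding vderiv_def vec_lambda_beta
    by (rule holomorphic_derivI[OF holomorphic_components open_domain assms])
  from DERIV_chain2[OF this DERIV_cmult_Id[of e "of_real s"]]
  have "((\<lambda>T. \<phi> (e * T) $ j) has_field_derivative vderiv \<phi> (e * of_real s) $ j * e) (at (of_real s))" .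
  from has_vector_derivative_real_field[OF this] show ?thesis
    by (simp add: vector_scalar_mult_def mult.commute)
qed

lemma holomorphic_curve_jet: "holomorphic_curve ((vderiv ^^ k) \<phi>) S"
  by (induction k) (simp_all add: holomorphic_curve_axioms holomorphic_curve.holomorphic_curve_vderiv)

definition line_herm :: "complex \<Rightarrow> nat \<Rightarrow> nat \<Rightarrow> real \<Rightarrow> complex" where
  "line_herm e j k s = herm ((vderiv ^^ j) \<phi> (e * of_real s)) ((vderiv ^^ k) \<phi> (e * of_real s))"

lemma line_herm_swap: "line_herm e k j s = cnj (line_herm e j k s)"
  unfolding line_herm_def by (rule herm_commute)

lemma line_herm_has_vector_derivative:
  assumes "e * of_real s \<in> S"
  shows "(line_herm e j k has_vector_derivative
           e * line_herm e (Suc j) k s + cnj e * line_herm e j (Suc k) s) (at s)"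
proof -
  note jet = holomorphic_curve.line_has_vector_derivative[OF holomorphic_curve_jet assms]
  from has_vector_derivative_herm[OF jet jet] show ?thesis
    unfolding line_herm_def[abs_def] by (simp add: herm_scale_left herm_scale_right add.commute)
qed

lemma pullback_line:
  "pullback \<phi> (e * of_real s) = A_coef (Re (line_herm e 0 0 s)) * Re (line_herm e 1 1 s)
                                + B_coef (Re (line_herm e 0 0 s)) * (cmod (line_herm e 1 0 s))\<^sup>2"
  by (simp add: pullback_def grauert_eq_coef line_herm_def herm_self)

lemma line_first_derivatives:
  assumes "e * of_real s \<in> S"
  shows "((\<lambda>s. Re (line_herm e 0 0 s)) has_real_derivative 2 * Re (e * line_herm e 1 0 s)) (at s)"
    and "((\<lambda>s. Re (line_herm e 1 1 s)) has_real_derivative 2 * Re (e * line_herm e 2 1 s)) (at s)"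
    and "((\<lambda>s. (cmod (line_herm e 1 0 s))\<^sup>2) has_real_derivative
           2 * Re ((e * line_herm e 2 0 s + cnj e * line_herm e 1 1 s) * cnj (line_herm e 1 0 s))) (at s)"
proof -
  note D = line_herm_has_vector_derivative[OF assms]
  show "((\<lambda>s. Re (line_herm e 0 0 s)) has_real_derivative 2 * Re (e * line_herm e 1 0 s)) (at s)"
    using has_field_derivative_Re[OF D[of 0 0]] by (simp add: line_herm_swap[of e "Suc 0" 0])
  show "((\<lambda>s. Re (line_herm e 1 1 s)) has_real_derivative 2 * Re (e * line_herm e 2 1 s)) (at s)"
    using has_field_derivative_Re[OF D[of 1 1]]
    by (simp add: line_herm_swap[of e "Suc (Suc 0)" "Suc 0"] numeral_2_eq_2)
  have "(\<lambda>s. (cmod (line_herm e 1 0 s))\<^sup>2) = (\<lambda>s. Re (line_herm e 1 0 s * cnj (line_herm e 1 0 s)))"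
    by (simp add: complex_mult_cnj cmod_power2)
  then show "((\<lambda>s. (cmod (line_herm e 1 0 s))\<^sup>2) has_real_derivative
           2 * Re ((e * line_herm e 2 0 s + cnj e * line_herm e 1 1 s) * cnj (line_herm e 1 0 s))) (at s)"
    using has_field_derivative_Re[OF has_vector_derivative_mult[OF D[of 1 0]
            has_vector_derivative_cnj[OF D[of 1 0]]]]
    by (simp add: numeral_2_eq_2 algebra_simps)
qed

lemma open_line_smooth_coefs: "open {s. e * of_real s \<in> S \<and> Re (line_herm e 0 0 s) \<in> {0<..} - {1}}"
proof -
  have "open {s. e * of_real s \<in> S}"
    using open_domain by (intro open_vimage[where f = "\<lambda>s. e * of_real s", unfolded vimage_def])
       (auto intro!: continuous_intros)
  moreover have "continuous_on {s. e * of_real s \<in> S} (\<lambda>s. Re (line_herm e 0 0 s))"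
    by (rule DERIV_continuous_on[OF has_field_derivative_at_within[OF line_first_derivatives(1)]]) simp
  ultimately have "open ({s. e * of_real s \<in> S} \<inter> (\<lambda>s. Re (line_herm e 0 0 s)) -` ({0<..} - {1}))"
    by (intro continuous_open_preimage) auto
  then show ?thesis
    by (simp add: vimage_def Int_def)
qed

lemma line_second_derivatives:
  fixes e :: complex
  assumes "0 \<in> S"
  defines "w' \<equiv> e * line_herm e 2 0 0 + cnj e * line_herm e 1 1 0"
    and "w'' \<equiv> e * (e * line_herm e 3 0 0 + cnj e * line_herm e 2 1 0)
               + cnj e * (e * line_herm e 2 1 0 + cnj e * line_herm e 1 2 0)"
  shows "((\<lambda>s. 2 * Re (e * line_herm e 1 0 s)) has_real_derivative 2 * Re (e * w')) (at 0)"
    and "((\<lambda>s. 2 * Re (e * line_herm e 2 1 s)) has_real_derivative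
           2 * Re (e * (e * line_herm e 3 1 0 + cnj e * line_herm e 2 2 0))) (at 0)"
    and "((\<lambda>s. 2 * Re ((e * line_herm e 2 0 s + cnj e * line_herm e 1 1 s) * cnj (line_herm e 1 0 s)))
           has_real_derivative 2 * ((cmod w')\<^sup>2 + Re (w'' * cnj (line_herm e 1 0 0)))) (at 0)"
proof -
  have D: "(line_herm e j k has_vector_derivative
              e * line_herm e (Suc j) k 0 + cnj e * line_herm e j (Suc k) 0) (at 0)" for j k
    using assms(1) by (intro line_herm_has_vector_derivative) simp
  show "((\<lambda>s. 2 * Re (e * line_herm e 1 0 s)) has_real_derivative 2 * Re (e * w')) (at 0)"
    using D[of 1 0] by (auto intro!: derivative_eq_intros simp: w'_def numeral_2_eq_2)
  show "((\<lambda>s. 2 * Re (e * line_herm e 2 1 s)) has_real_derivative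
           2 * Re (e * (e * line_herm e 3 1 0 + cnj e * line_herm e 2 2 0))) (at 0)"
    using D[of 2 1] by (auto intro!: derivative_eq_intros simp: numeral_2_eq_2 numeral_3_eq_3)
  have "((\<lambda>s. e * line_herm e 2 0 s + cnj e * line_herm e 1 1 s) has_vector_derivative w'') (at 0)"
    unfolding w''_def using D[of 2 0] D[of 1 1]
    by (auto intro!: derivative_eq_intros simp: numeral_2_eq_2 numeral_3_eq_3)
  moreover have "(line_herm e 1 0 has_vector_derivative w') (at 0)"
    using D[of 1 0] by (simp add: w'_def numeral_2_eq_2)
  ultimately have "((\<lambda>s. Re ((e * line_herm e 2 0 s + cnj e * line_herm e 1 1 s) * cnj (line_herm e 1 0 s)))
      has_real_derivative Re (w' * cnj w' + w'' * cnj (line_herm e 1 0 0))) (at 0)"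
    using has_field_derivative_Re[OF has_vector_derivative_mult[OF _ has_vector_derivative_cnj]]
    by (simp only: w'_def)
  then show "((\<lambda>s. 2 * Re ((e * line_herm e 2 0 s + cnj e * line_herm e 1 1 s) * cnj (line_herm e 1 0 s)))
           has_real_derivative 2 * ((cmod w')\<^sup>2 + Re (w'' * cnj (line_herm e 1 0 0)))) (at 0)"
    by (rule DERIV_cong[OF DERIV_cmult]) (simp add: complex_mult_cnj cmod_power2)
qed

end

(* (ln h)''(0) for h(s) = g(phi(e s), phi'(e s)), in terms of z, X, Y, Z = phi, phi', phi'', phi''' at 0;
   w, w', w'' are <phi', phi> along the line and its first two derivatives at 0. *)
definition jet_ln_deriv2 ::
    "complex \<Rightarrow> complex^'n \<Rightarrow> complex^'n \<Rightarrow> complex^'n \<Rightarrow> complex^'n \<Rightarrow> real"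
  where "jet_ln_deriv2 e z X Y Z =
    (let t = (norm z)\<^sup>2;
         w = herm X z;
         w' = e * herm Y z + cnj e * of_real ((norm X)\<^sup>2);
         w'' = e * (e * herm Z z + cnj e * herm Y X) + cnj e * (e * herm Y X + cnj e * herm X Y)
     in ln_combination_deriv2 (A_coef t) (B_coef t) (C_coef t) (D_coef t)
          (2 * Re (e * w)) (2 * Re (e * w'))
          ((norm X)\<^sup>2) (2 * Re (e * herm Y X)) (2 * Re (e * (e * herm Z X + cnj e * of_real ((norm Y)\<^sup>2))))
          ((cmod w)\<^sup>2) (2 * Re (w' * cnj w)) (2 * ((cmod w')\<^sup>2 + Re (w'' * cnj w))))"

lemma (in holomorphic_curve) deriv_deriv_ln_pullback_line:
  assumes "0 \<in> S" "\<phi> 0 \<noteq> 0" "norm (\<phi> 0) \<noteq> 1" "pullback \<phi> 0 > 0"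
  shows "deriv (deriv (\<lambda>s. ln (pullback \<phi> (e * of_real s)))) 0
           = jet_ln_deriv2 e (\<phi> 0) (vderiv \<phi> 0) ((vderiv ^^ 2) \<phi> 0) ((vderiv ^^ 3) \<phi> 0)"
proof -
  define P where "P = line_herm e"
  define \<rho> where "\<rho> s = Re (P 0 0 s)" for s
  define U where "U = {s. e * of_real s \<in> S \<and> \<rho> s \<in> {0<..} - {1}}"
  have "open U"
    unfolding U_def \<rho>_def P_def by (rule open_line_smooth_coefs)
  have \<rho>0: "\<rho> 0 = (norm (\<phi> 0))\<^sup>2"
    by (simp add: \<rho>_def P_def line_herm_def herm_self)
  have "0 < \<rho> 0" "\<rho> 0 \<noteq> 1"
    using assms(2,3) power2_eq_iff_nonneg[of "norm (\<phi> 0)" 1] by (simp_all add: \<rho>0)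
  then have "0 \<in> U"
    using assms(1) by (simp add: U_def)
  have "deriv (deriv (\<lambda>s. ln (pullback \<phi> (e * of_real s)))) 0
      = deriv (deriv (\<lambda>s. ln (A_coef (\<rho> s) * Re (P 1 1 s) + B_coef (\<rho> s) * (cmod (P 1 0 s))\<^sup>2))) 0"
    by (simp only: pullback_line \<rho>_def P_def)
  also have "\<dots> = ln_combination_deriv2 (A_coef (\<rho> 0)) (B_coef (\<rho> 0)) (C_coef (\<rho> 0)) (D_coef (\<rho> 0))
      (2 * Re (e * P 1 0 0)) (2 * Re (e * (e * P 2 0 0 + cnj e * P 1 1 0)))
      (Re (P 1 1 0)) (2 * Re (e * P 2 1 0)) (2 * Re (e * (e * P 3 1 0 + cnj e * P 2 2 0)))
      ((cmod (P 1 0 0))\<^sup>2) (2 * Re ((e * P 2 0 0 + cnj e * P 1 1 0) * cnj (P 1 0 0)))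
      (2 * ((cmod (e * P 2 0 0 + cnj e * P 1 1 0))\<^sup>2
        + Re ((e * (e * P 3 0 0 + cnj e * P 2 1 0) + cnj e * (e * P 2 1 0 + cnj e * P 1 2 0))
              * cnj (P 1 0 0))))"
    unfolding P_def
  proof (rule deriv_deriv_ln_combination[OF \<open>open U\<close> \<open>0 \<in> U\<close> _ _ _
                                            line_second_derivatives[OF assms(1)]])
    show "(A_coef has_real_derivative B_coef (\<rho> s)) (at (\<rho> s))"
      "(B_coef has_real_derivative C_coef (\<rho> s)) (at (\<rho> s))" if "s \<in> U" for s
      using that by (auto simp: U_def intro!: A_coef_has_derivative B_coef_has_derivative)
    show "(C_coef has_real_derivative D_coef (\<rho> 0)) (at (\<rho> 0))"
      using \<open>0 < \<rho> 0\<close> \<open>\<rho> 0 \<noteq> 1\<close> by (rule C_coef_has_derivative)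
    show "A_coef (\<rho> 0) * Re (line_herm e 1 1 0) + B_coef (\<rho> 0) * (cmod (line_herm e 1 0 0))\<^sup>2 > 0"
      using assms(4) pullback_line[of e 0] by (simp add: \<rho>_def P_def)
    show "(\<rho> has_real_derivative 2 * Re (e * line_herm e 1 0 s)) (at s)"
      and "((\<lambda>s. Re (line_herm e 1 1 s)) has_real_derivative 2 * Re (e * line_herm e 2 1 s)) (at s)"
      and "((\<lambda>s. (cmod (line_herm e 1 0 s))\<^sup>2) has_real_derivative
             2 * Re ((e * line_herm e 2 0 s + cnj e * line_herm e 1 1 s) * cnj (line_herm e 1 0 s))) (at s)"
      if "s \<in> U" for s
      using line_first_derivatives[of e s] that by (simp_all add: U_def \<rho>_def[abs_def] P_def)
  qed
  also have "\<dots> = jet_ln_deriv2 e (\<phi> 0) (vderiv \<phi> 0) ((vderiv ^^ 2) \<phi> 0) ((vderiv ^^ 3) \<phi> 0)"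
  proof -
    define z X Y Z where "z = \<phi> 0" "X = vderiv \<phi> 0" "Y = (vderiv ^^ 2) \<phi> 0" "Z = (vderiv ^^ 3) \<phi> 0"
    have "P 1 0 0 = herm X z" "P 2 0 0 = herm Y z" "P 3 0 0 = herm Z z"
      "P 2 1 0 = herm Y X" "P 1 2 0 = herm X Y" "P 3 1 0 = herm Z X"
      "P 1 1 0 = of_real ((norm X)\<^sup>2)" "P 2 2 0 = of_real ((norm Y)\<^sup>2)"
      by (simp_all add: P_def line_herm_def z_X_Y_Z_def herm_self numeral_2_eq_2 numeral_3_eq_3)
    then show ?thesis
      unfolding jet_ln_deriv2_def Let_def z_X_Y_Z_def[symmetric] \<rho>0 by simp
  qed
  finally show ?thesis .
qed

definition jet_curvature :: "complex^'n \<Rightarrow> complex^'n \<Rightarrow> complex^'n \<Rightarrow> complex^'n \<Rightarrow> real" where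
  "jet_curvature z X Y Z = - (jet_ln_deriv2 1 z X Y Z + jet_ln_deriv2 \<i> z X Y Z) / (2 * grauert z X)"

lemma (in holomorphic_curve) gauss_curv0_pullback:
  assumes "0 \<in> S" "\<phi> 0 \<noteq> 0" "norm (\<phi> 0) \<noteq> 1" "pullback \<phi> 0 > 0"
  shows "gauss_curv0 (pullback \<phi>)
           = jet_curvature (\<phi> 0) (vderiv \<phi> 0) ((vderiv ^^ 2) \<phi> 0) ((vderiv ^^ 3) \<phi> 0)"
proof -
  have "deriv (deriv (\<lambda>s. ln (pullback \<phi> (of_real s)))) 0
          = jet_ln_deriv2 1 (\<phi> 0) (vderiv \<phi> 0) ((vderiv ^^ 2) \<phi> 0) ((vderiv ^^ 3) \<phi> 0)"
    using deriv_deriv_ln_pullback_line[OF assms, of 1] by simp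
  moreover have "deriv (deriv (\<lambda>s. ln (pullback \<phi> (\<i> * of_real s)))) 0
          = jet_ln_deriv2 \<i> (\<phi> 0) (vderiv \<phi> 0) ((vderiv ^^ 2) \<phi> 0) ((vderiv ^^ 3) \<phi> 0)"
    by (rule deriv_deriv_ln_pullback_line[OF assms])
  ultimately show ?thesis
    using assms(4)
    by (simp add: gauss_curv0_def ddbar_at0_def jet_curvature_def pullback_def field_simps)
qed

section \<open>Orthogonal and radial directions\<close>

lemma jet_curvature_orthogonal:
  assumes "z \<noteq> 0" "X \<noteq> 0" "herm X z = 0"
  shows "jet_curvature z X 0 0 = - 4 * B_coef ((norm z)\<^sup>2) / (A_coef ((norm z)\<^sup>2))\<^sup>2"
proof -
  define t where "t = (norm z)\<^sup>2"
  have "A_coef t > 0" "(norm X)\<^sup>2 > 0"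
    using assms by (simp_all add: t_def A_coef_pos)
  then have "jet_ln_deriv2 1 z X 0 0 = 4 * B_coef t * (norm X)\<^sup>2 / A_coef t"
    "jet_ln_deriv2 \<i> z X 0 0 = 4 * B_coef t * (norm X)\<^sup>2 / A_coef t"
    unfolding jet_ln_deriv2_def Let_def t_def[symmetric] assms(3)
    by (simp_all add: ln_combination_deriv2_def Let_def norm_mult field_simps power2_eq_square)
  moreover have "grauert z X = A_coef t * (norm X)\<^sup>2"
    using assms(3) by (simp add: grauert_eq_coef t_def)
  ultimately show ?thesis
    unfolding jet_curvature_def t_def[symmetric]
    using \<open>A_coef t > 0\<close> assms(2) by (simp add: field_simps power2_eq_square)
qed

(* With G = A + t B = 1 + t u^2 one has G' = 2B + tC and G'' = 3C + tD, so this is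
   -2((t G')' G - t G'^2)/G^3. *)
definition radial_curvature :: "real \<Rightarrow> real" where
  "radial_curvature t =
    (let A = A_coef t; B = B_coef t; C = C_coef t; D = D_coef t
     in - 2 * (((2 * B + t * C) + t * (3 * C + t * D)) * (A + t * B) - t * (2 * B + t * C)\<^sup>2)
          / (A + t * B) ^ 3)"

(* The two argument lists are those of jet_ln_deriv2 1 and jet_ln_deriv2 i for X = z, |z|^2 = r,
   <Y,z> = p1 + i p2, <Z,z> = k1 + i k2 and |Y|^2 = y. *)
lemma ln_combination_deriv2_radial:
  fixes A B C D r y p1 p2 k1 k2 :: real
  assumes "r > 0" "A + r * B > 0"
  shows "- (ln_combination_deriv2 A B C D (2 * r) (2 * (r + p1)) r (2 * p1) (2 * (y + k1))
              (r * r) (2 * r * (r + p1)) (2 * ((r + p1)\<^sup>2 + p2\<^sup>2 + r * (3 * p1 + k1)))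
          + ln_combination_deriv2 A B C D 0 (2 * (r - p1)) r (- 2 * p2) (2 * (y - k1))
              (r * r) (- 2 * r * p2) (2 * ((p1 - r)\<^sup>2 + p2\<^sup>2 + r * (p1 - k1))))
          / (2 * (A * r + B * (r * r)))
       = - 2 * (((2 * B + r * C) + r * (3 * C + r * D)) * (A + r * B) - r * (2 * B + r * C)\<^sup>2)
            / (A + r * B) ^ 3
         - 2 * A * (y - (p1\<^sup>2 + p2\<^sup>2) / r) / (r * (A + r * B))\<^sup>2"
proof -
  define G where "G = A + r * B"
  have h: "A * r + B * (r * r) = r * G"
    by (simp add: G_def algebra_simps)
  have "r * G \<noteq> 0"
    using assms by (simp add: G_def)
  have sum: "- ((N1 / h - (H1 / h)\<^sup>2) + (N2 / h - (H2 / h)\<^sup>2)) / (2 * h)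
               = - (h * (N1 + N2) - H1\<^sup>2 - H2\<^sup>2) / (2 * h ^ 3)" if "h \<noteq> 0" for h N1 N2 H1 H2 :: real
    using that by (simp add: field_simps power2_eq_square eval_nat_numeral)
  have poly: "(r * G) *
     ((C * (2*r)\<^sup>2 * r + B * (2*(r+p1)) * r + 2 * B * (2*r) * (2*p1) + A * (2*(y+k1))
       + D * (2*r)\<^sup>2 * (r*r) + C * (2*(r+p1)) * (r*r) + 2 * C * (2*r) * (2*r*(r+p1))
       + B * (2*((r+p1)\<^sup>2+p2\<^sup>2+r*(3*p1+k1))))
    + (C * 0\<^sup>2 * r + B * (2*(r-p1)) * r + 2 * B * 0 * (-2*p2) + A * (2*(y-k1))
       + D * 0\<^sup>2 * (r*r) + C * (2*(r-p1)) * (r*r) + 2 * C * 0 * (-2*r*p2)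
       + B * (2*((p1-r)\<^sup>2+p2\<^sup>2+r*(p1-k1)))))
    - (B * (2*r) * r + A * (2*p1) + C * (2*r) * (r*r) + B * (2*r*(r+p1)))\<^sup>2
    - (B * 0 * r + A * (-2*p2) + C * 0 * (r*r) + B * (-2*r*p2))\<^sup>2
   = 4 * r ^ 3 * (((2*B + r*C) + r * (3*C + r*D)) * G - r * (2*B + r*C)\<^sup>2)
     + 4 * A * G * (r*y - p1\<^sup>2 - p2\<^sup>2)"
    by (simp add: G_def algebra_simps power2_eq_square eval_nat_numeral)
  have "G > 0"
    using assms by (simp add: G_def)
  have "- (4 * r ^ 3 * (((2*B + r*C) + r * (3*C + r*D)) * G - r * (2*B + r*C)\<^sup>2)
           + 4 * A * G * (r*y - p1\<^sup>2 - p2\<^sup>2)) / (2 * (r * G) ^ 3)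
        = - 2 * (((2 * B + r * C) + r * (3 * C + r * D)) * G - r * (2 * B + r * C)\<^sup>2) / G ^ 3
          - 2 * A * (y - (p1\<^sup>2 + p2\<^sup>2) / r) / (r * G)\<^sup>2"
    using \<open>r > 0\<close> \<open>G > 0\<close> by (simp add: field_simps power2_eq_square eval_nat_numeral)
  then show ?thesis
    unfolding ln_combination_deriv2_def Let_def h sum[OF \<open>r * G \<noteq> 0\<close>] poly G_def[symmetric] .
qed

lemma jet_curvature_radial:
  assumes "z \<noteq> 0"
  defines "t \<equiv> (norm z)\<^sup>2"
  shows "jet_curvature z z Y Z = radial_curvature t
           - 2 * A_coef t * ((norm Y)\<^sup>2 - (cmod (herm Y z))\<^sup>2 / t) / (t * (A_coef t + t * B_coef t))\<^sup>2"
proof -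
  have "t > 0"
    using assms by (simp add: t_def)
  then have G: "A_coef t + t * B_coef t > 0"
    by (simp add: A_coef_add_B_coef add_pos_nonneg)
  obtain p1 p2 where p: "herm Y z = Complex p1 p2"
    using complex.exhaust by metis
  obtain k1 k2 where k: "herm Z z = Complex k1 k2"
    using complex.exhaust by metis
  have zz: "herm z z = of_real t" and zY: "herm z Y = Complex p1 (- p2)"
    by (simp_all add: t_def herm_self herm_commute[of z Y] p complex_eq_iff)
  have "jet_ln_deriv2 1 z z Y Z = ln_combination_deriv2 (A_coef t) (B_coef t) (C_coef t) (D_coef t)
          (2 * t) (2 * (t + p1)) t (2 * p1) (2 * ((norm Y)\<^sup>2 + k1))
          (t * t) (2 * t * (t + p1)) (2 * ((t + p1)\<^sup>2 + p2\<^sup>2 + t * (3 * p1 + k1)))"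
    unfolding jet_ln_deriv2_def Let_def t_def[symmetric] zz zY p k cmod_power2
    by (simp add: algebra_simps power2_eq_square)
  moreover have "jet_ln_deriv2 \<i> z z Y Z = ln_combination_deriv2 (A_coef t) (B_coef t) (C_coef t) (D_coef t)
          0 (2 * (t - p1)) t (- 2 * p2) (2 * ((norm Y)\<^sup>2 - k1))
          (t * t) (- 2 * t * p2) (2 * ((p1 - t)\<^sup>2 + p2\<^sup>2 + t * (p1 - k1)))"
    unfolding jet_ln_deriv2_def Let_def t_def[symmetric] zz zY p k cmod_power2
    by (simp add: algebra_simps power2_eq_square)
  moreover have "grauert z z = A_coef t * t + B_coef t * (t * t)"
    unfolding grauert_eq_coef t_def[symmetric] zz by (simp add: power2_eq_square)
  ultimately show ?thesis
    unfolding jet_curvature_def radial_curvature_def Let_def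
    using ln_combination_deriv2_radial[OF \<open>t > 0\<close> G] by (simp add: p cmod_power2)
qed

lemma radial_curvature_eventually_neg: "eventually (\<lambda>t. radial_curvature t < 0) at_top"
proof -
  have "eventually (\<lambda>t::real.
      ((((t-1)/(t*ln t))\<^sup>2 + 2 * t * ((t-1)/(t*ln t)) * ((ln t + 1 - t)/(t\<^sup>2 * (ln t)\<^sup>2)))
        + t * (4 * ((t-1)/(t*ln t)) * ((ln t + 1 - t)/(t\<^sup>2 * (ln t)\<^sup>2))
           + 2 * t * (((ln t + 1 - t)/(t\<^sup>2 * (ln t)\<^sup>2))\<^sup>2
              + ((t-1)/(t*ln t)) * (((1-t)*ln t - 2*(ln t+1-t)*(ln t+1))/(t^3*(ln t)^3)))))
       * (1 + t * ((t-1)/(t*ln t))\<^sup>2)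
      - t * (((t-1)/(t*ln t))\<^sup>2 + 2 * t * ((t-1)/(t*ln t)) * ((ln t + 1 - t)/(t\<^sup>2 * (ln t)\<^sup>2)))\<^sup>2
      > 0) at_top"
    by real_asymp
  moreover have "eventually (\<lambda>t::real. t > 1) at_top"
    by (rule eventually_gt_at_top)
  ultimately show ?thesis
  proof eventually_elim
    case (elim t)
    then have t: "t > 0" "t \<noteq> 1"
      by auto
    have G: "A_coef t + t * B_coef t = 1 + t * (u_fun t)\<^sup>2"
      using t(1) by (rule A_coef_add_B_coef)
    have G': "2 * B_coef t + t * C_coef t = (u_fun t)\<^sup>2 + 2 * t * u_fun t * u_deriv t"
      using t by (simp add: B_coef_def C_coef_def field_simps power2_eq_square eval_nat_numeral)
    have G'': "3 * C_coef t + t * D_coef t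
                 = 4 * u_fun t * u_deriv t + 2 * t * ((u_deriv t)\<^sup>2 + u_fun t * u_deriv2 t)"
      using t by (simp add: C_coef_def D_coef_def field_simps power2_eq_square eval_nat_numeral)
    have pos: "0 < 1 + t * (u_fun t)\<^sup>2"
      using t by (simp add: add_pos_nonneg)
    have u: "u_fun t = (t - 1) / (t * ln t)"
      using t by (simp add: u_fun_def)
    have "radial_curvature t =
        - 2 * ((((u_fun t)\<^sup>2 + 2 * t * u_fun t * u_deriv t)
                 + t * (4 * u_fun t * u_deriv t + 2 * t * ((u_deriv t)\<^sup>2 + u_fun t * u_deriv2 t)))
                * (1 + t * (u_fun t)\<^sup>2) - t * ((u_fun t)\<^sup>2 + 2 * t * u_fun t * u_deriv t)\<^sup>2)
        / (1 + t * (u_fun t)\<^sup>2) ^ 3"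
      unfolding radial_curvature_def Let_def G G' G'' ..
    also have "\<dots> < 0"
      using elim(1) pos unfolding u u_deriv_def u_deriv2_def by (intro divide_neg_pos) auto
    finally show ?case .
  qed
qed

lemma orthogonal_curvature_lower_bound:
  assumes "0 < r" "r < exp (-1)"
  shows "4 * (1 - r)\<^sup>2 * (- ln r - 1) / (r * - ln r + 1)\<^sup>2 \<le> - 4 * B_coef r / (A_coef r)\<^sup>2"
proof -
  define L where "L = - ln r"
  have "ln r < ln (exp (-1))"
    using assms by (subst ln_less_cancel_iff) auto
  then have "L > 1"
    by (simp add: L_def)
  have "r < 1"
    using assms(2) by (rule less_trans) simp
  have v_lower: "(1 - r)\<^sup>2 / L \<le> v_fun r" and v_upper: "v_fun r \<le> 1 / L"
    using v_fun_bounds[OF assms(1) \<open>r < 1\<close>] by (simp_all add: L_def)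
  define \<beta> where "\<beta> = (1 - r)\<^sup>2 * (L - 1) / (r\<^sup>2 * L\<^sup>2)"
  have "\<beta> = (1 - r)\<^sup>2 / L / r\<^sup>2 - (u_fun r)\<^sup>2"
    using assms(1) \<open>r < 1\<close> \<open>L > 1\<close>
    by (simp add: \<beta>_def u_fun_def L_def power2_eq_square field_simps)
  also have "\<dots> \<le> - B_coef r"
    using divide_right_mono[OF v_lower, of "r\<^sup>2"] by (simp add: B_coef_def)
  finally have "\<beta> \<le> - B_coef r" .
  have "0 \<le> \<beta>"
    using \<open>L > 1\<close> by (simp add: \<beta>_def)
  have "A_coef r \<le> 1 + (1 / L) / r"
    using divide_right_mono[OF v_upper, of r] assms(1) by (simp add: A_coef_def)
  also have "\<dots> = (r * L + 1) / (r * L)"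
    using assms(1) \<open>L > 1\<close> by (simp add: field_simps)
  finally have A_upper: "A_coef r \<le> (r * L + 1) / (r * L)" .
  have "4 * \<beta> * (r * L)\<^sup>2 = 4 * (1 - r)\<^sup>2 * (L - 1)"
    using assms(1) \<open>L > 1\<close> by (simp add: \<beta>_def field_simps power2_eq_square)
  then have "4 * (1 - r)\<^sup>2 * (- ln r - 1) / (r * - ln r + 1)\<^sup>2 = 4 * \<beta> * (r * L)\<^sup>2 / (r * L + 1)\<^sup>2"
    by (simp add: L_def)
  also have "\<dots> = 4 * \<beta> / ((r * L + 1) / (r * L))\<^sup>2"
    by (simp add: power_divide)
  also have "\<dots> \<le> - 4 * B_coef r / (A_coef r)\<^sup>2"
  proof (rule frac_le)
    show "0 \<le> - 4 * B_coef r" "4 * \<beta> \<le> - 4 * B_coef r"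
      using \<open>\<beta> \<le> - B_coef r\<close> \<open>0 \<le> \<beta>\<close> by simp_all
    show "0 < (A_coef r)\<^sup>2" "(A_coef r)\<^sup>2 \<le> ((r * L + 1) / (r * L))\<^sup>2"
      using A_coef_pos[OF assms(1)] A_upper by (auto intro: power_mono)
  qed
  finally show ?thesis .
qed

lemma exists_orthogonal:
  assumes "CARD('n) \<ge> 2"
  shows "\<exists>X::complex^'n. X \<noteq> 0 \<and> herm X z = 0"
proof -
  obtain i j :: 'n where ij: "i \<noteq> j"
    using assms card_le_Suc0_iff_eq[of "UNIV :: 'n set"] by fastforce
  show ?thesis
  proof (cases "z $ i = 0")
    case True
    define X where "X = (\<chi> k. if k = i then (1::complex) else 0)"
    have "herm X z = (\<Sum>k\<in>UNIV. if k = i then cnj (z $ i) else 0)"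
      unfolding herm_def X_def by (intro sum.cong) auto
    then have "herm X z = 0"
      using True by simp
    moreover have "X \<noteq> 0"
      by (auto simp: X_def vec_eq_iff)
    ultimately show ?thesis
      by blast
  next
    case False
    define X where "X = (\<chi> k. if k = i then cnj (z $ j) else if k = j then - cnj (z $ i) else 0)"
    have "herm X z = (\<Sum>k\<in>UNIV. (if k = i then cnj (z $ j) * cnj (z $ i) else 0)
                                  + (if k = j then - cnj (z $ i) * cnj (z $ j) else 0))"
      unfolding herm_def X_def using ij by (intro sum.cong) auto
    then have "herm X z = 0"
      by (simp add: sum.distrib)
    moreover have "X \<noteq> 0"
      using False ij by (auto simp: X_def vec_eq_iff)
    ultimately show ?thesis
      by blast
  qed
qed

lemma hsc_ge_orthogonal:
  fixes z X :: "complex^'n"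
  assumes "z \<noteq> 0" "norm z < 1" "X \<noteq> 0" "herm X z = 0"
  shows "ereal (- 4 * B_coef ((norm z)\<^sup>2) / (A_coef ((norm z)\<^sup>2))\<^sup>2) \<le> hsc z X"
proof -
  define \<phi> where "\<phi> T = z + T *s X" for T
  have components: "(\<lambda>T. \<phi> T $ j) = (\<lambda>T. z $ j + T * X $ j)" for j
    by (simp add: \<phi>_def)
  interpret holomorphic_curve \<phi> UNIV
    by unfold_locales (auto simp: components intro!: holomorphic_intros)
  have deriv_const: "deriv (\<lambda>T. c) = (\<lambda>T. 0)" for c :: complex
    by (auto intro!: DERIV_imp_deriv)
  have "deriv (\<lambda>T. z $ j + T * X $ j) T = X $ j" for j T
    by (rule DERIV_imp_deriv) (auto intro!: derivative_eq_intros)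
  then have "vderiv \<phi> = (\<lambda>T. X)"
    by (intro ext) (simp add: vderiv_def components vec_eq_iff)
  then have jets: "vderiv \<phi> 0 = X" "(vderiv ^^ 2) \<phi> 0 = 0" "(vderiv ^^ 3) \<phi> 0 = 0"
    by (simp_all add: numeral_2_eq_2 numeral_3_eq_3 vderiv_def deriv_const vec_eq_iff)
  have "herm (\<phi> T) z = of_real ((norm z)\<^sup>2)" for T
    using assms(4) by (simp add: \<phi>_def herm_add_left herm_scale_left herm_self)
  then have "\<phi> T \<noteq> 0" for T
    using assms(1) by (metis herm_zero_left of_real_eq_0_iff power_not_zero norm_eq_zero)
  then have "\<phi> \<in> adm_curves z X"
    unfolding adm_curves_def using holomorphic_components jets(1)
    by (intro CollectI exI[of _ UNIV]) (auto simp: \<phi>_def)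
  then have "ereal (gauss_curv0 (pullback \<phi>)) \<le> hsc z X"
    unfolding hsc_def by (rule SUP_upper)
  moreover have "pullback \<phi> 0 > 0"
    using assms A_coef_pos[of "(norm z)\<^sup>2"]
    by (simp add: pullback_def grauert_eq_coef jets \<phi>_def)
  then have "gauss_curv0 (pullback \<phi>) = jet_curvature z X 0 0"
    using assms(1,2) gauss_curv0_pullback jets by (simp add: \<phi>_def)
  ultimately show ?thesis
    using jet_curvature_orthogonal[OF assms(1,3,4)] by simp
qed

lemma gauss_curv0_radial_le:
  fixes z :: "complex^'n"
  assumes "\<phi> \<in> adm_curves z z" "1 < norm z"
  shows "gauss_curv0 (pullback \<phi>) \<le> radial_curvature ((norm z)\<^sup>2)"
proof -
  obtain S where "open S" "0 \<in> S" "\<And>j. (\<lambda>T. \<phi> T $ j) holomorphic_on S"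
    and jets: "\<phi> 0 = z" "vderiv \<phi> 0 = z"
    using assms(1) unfolding adm_curves_def by blast
  then interpret holomorphic_curve \<phi> S
    by unfold_locales
  define t where "t = (norm z)\<^sup>2"
  define Y where "Y = (vderiv ^^ 2) \<phi> 0"
  have "t > 0" "z \<noteq> 0"
    using assms(2) by (auto simp: t_def)
  have G: "A_coef t + t * B_coef t > 0"
    using \<open>t > 0\<close> by (simp add: A_coef_add_B_coef add_pos_nonneg)
  have "pullback \<phi> 0 = t * (A_coef t + t * B_coef t)"
    unfolding pullback_def grauert_eq_coef jets herm_self t_def[symmetric]
    using \<open>t > 0\<close> by (simp add: power2_eq_square algebra_simps)
  then have "gauss_curv0 (pullback \<phi>) = jet_curvature z z Y ((vderiv ^^ 3) \<phi> 0)"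
    using gauss_curv0_pullback \<open>0 \<in> S\<close> \<open>z \<noteq> 0\<close> \<open>t > 0\<close> G assms(2)
    by (simp add: jets Y_def)
  also have "\<dots> = radial_curvature t
      - 2 * A_coef t * ((norm Y)\<^sup>2 - (cmod (herm Y z))\<^sup>2 / t) / (t * (A_coef t + t * B_coef t))\<^sup>2"
    unfolding t_def by (rule jet_curvature_radial[OF \<open>z \<noteq> 0\<close>])
  also have "\<dots> \<le> radial_curvature t"
  proof -
    have "(cmod (herm Y z))\<^sup>2 \<le> (norm Y)\<^sup>2 * t"
      unfolding t_def power_mult_distrib[symmetric] by (intro power_mono norm_herm_le) auto
    then have "(cmod (herm Y z))\<^sup>2 / t \<le> (norm Y)\<^sup>2"
      using \<open>t > 0\<close> by (simp add: divide_le_eq)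
    moreover have "A_coef t \<ge> 0"
      using A_coef_pos[OF \<open>t > 0\<close>] by simp
    ultimately show ?thesis
      by simp
  qed
  finally show ?thesis
    by (simp add: t_def)
qed

lemma Kplus_tendsto_infinity:
  assumes "CARD('n) \<ge> 2"
  shows "((Kplus :: complex^'n \<Rightarrow> ereal) \<longlongrightarrow> \<infinity>) (at 0)"
  unfolding tendsto_PInfty
proof
  fix M :: real
  define LB where "LB r = 4 * (1 - r)\<^sup>2 * (- ln r - 1) / (r * - ln r + 1)\<^sup>2" for r :: real
  have "filterlim LB at_top (at_right 0)"
    unfolding LB_def by real_asymp
  moreover have "eventually (\<lambda>r::real. r < exp (-1)) (at_right 0)"
    by real_asymp
  ultimately have "eventually (\<lambda>r. M < LB r \<and> 0 < r \<and> r < exp (-1)) (at_right 0)"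
    by (auto simp: filterlim_at_top_dense eventually_at_right_less elim: eventually_elim2
             intro!: eventually_conj)
  moreover have "filterlim (\<lambda>z::complex^'n. (norm z)\<^sup>2) (at_right 0) (at 0)"
    by (rule tendsto_imp_filterlim_at_right)
       (auto intro!: tendsto_eq_intros simp: eventually_at_filter)
  ultimately have "eventually (\<lambda>z::complex^'n.
      M < LB ((norm z)\<^sup>2) \<and> 0 < (norm z)\<^sup>2 \<and> (norm z)\<^sup>2 < exp (-1)) (at 0)"
    by (rule eventually_compose_filterlim)
  then show "eventually (\<lambda>z::complex^'n. ereal M < Kplus z) (at 0)"
  proof eventually_elim
    case (elim z)
    then have "z \<noteq> 0" and "(norm z)\<^sup>2 < exp (-1)"
      by auto
    then have "(norm z)\<^sup>2 < 1\<^sup>2"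
      by (simp add: less_trans[OF _ exp_less_one_iff[THEN iffD2]])
    then have "norm z < 1"
      by (rule power_less_imp_less_base) simp
    obtain X :: "complex^'n" where X: "X \<noteq> 0" "herm X z = 0"
      using exists_orthogonal[OF assms] by blast
    have "ereal M < ereal (LB ((norm z)\<^sup>2))"
      using elim by simp
    also have "\<dots> \<le> ereal (- 4 * B_coef ((norm z)\<^sup>2) / (A_coef ((norm z)\<^sup>2))\<^sup>2)"
      using orthogonal_curvature_lower_bound elim by (simp add: LB_def)
    also have "\<dots> \<le> hsc z X"
      by (rule hsc_ge_orthogonal[OF \<open>z \<noteq> 0\<close> \<open>norm z < 1\<close> X])
    also have "\<dots> \<le> Kplus z"
      unfolding Kplus_def using X by (intro SUP_upper) auto
    finally show ?case .
  qed
qed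

lemma Kminus_negative_outside_ball: "\<exists>R>0. \<forall>z::complex^'n. norm z \<ge> R \<longrightarrow> Kminus z < 0"
proof -
  obtain N where N: "\<And>t. t \<ge> N \<Longrightarrow> radial_curvature t < 0"
    using radial_curvature_eventually_neg unfolding eventually_at_top_linorder by blast
  define R where "R = max (sqrt \<bar>N\<bar>) 2"
  have "Kminus z < 0" if "norm z \<ge> R" for z :: "complex^'n"
  proof -
    have "1 < norm z" "z \<noteq> 0"
      using that by (auto simp: R_def)
    have "\<bar>N\<bar> \<le> (norm z)\<^sup>2"
      using that by (intro sqrt_le_D) (simp add: R_def)
    have "Kminus z \<le> hsc z z"
      unfolding Kminus_def using \<open>z \<noteq> 0\<close> by (intro INF_lower) auto
    also have "\<dots> \<le> ereal (radial_curvature ((norm z)\<^sup>2))"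
      unfolding hsc_def using gauss_curv0_radial_le \<open>1 < norm z\<close> by (intro SUP_least) simp
    also have "\<dots> < 0"
      using N \<open>\<bar>N\<bar> \<le> (norm z)\<^sup>2\<close> by simp
    finally show ?thesis .
  qed
  then show ?thesis
    by (intro exI[of _ R]) (simp add: R_def)
qed

theorem theorem1p1:
  assumes "CARD('n) \<ge> 2"
  shows "((Kplus :: complex^'n \<Rightarrow> ereal) \<longlongrightarrow> \<infinity>) (at 0)
         \<and> (\<exists>R>0. \<forall>z::complex^'n. norm z \<ge> R \<longrightarrow> Kminus z < 0)"
  using Kplus_tendsto_infinity[OF assms] Kminus_negative_outside_ball by blast

end
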